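(* Let $f$ be a rational function with real coefficients such that $\int_{-\infty}^{\infty}f(x)\,dx$ is finite (absolutely convergent). Then $$\int_{-\infty}^{\infty}f(x)\,dx=\int_{-\infty}^{\infty}\Big[f\big(y+\sqrt{y^{2}+1}\big)+f\big(y-\sqrt{y^{2}+1}\big)\Big]dy+\int_{-\infty}^{\infty}\Big[f\big(y+\sqrt{y^{2}+1}\big)-f\big(y-\sqrt{y^{2}+1}\big)\Big]\frac{y\,dy}{\sqrt{y^{2}+1}}.$$ Moreover, if $f$ is even, the identity remains valid when every interval of integration $(-\infty,\infty)$ is replaced by $(0,\infty)$. *)

theory Defs
  imports "HOL-Analysis.Analysis" "HOL-Computational_Algebra.Polynomial"
begin

definition rat_fun :: "real poly \<Rightarrow> real poly \<Rightarrow> real \<Rightarrow> real" where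
  "rat_fun p q x = poly p x / poly q x"

definition rhs_integrand :: "(real \<Rightarrow> real) \<Rightarrow> real \<Rightarrow> real" where
  "rhs_integrand f y =
     (f (y + sqrt (y\<^sup>2 + 1)) + f (y - sqrt (y\<^sup>2 + 1)))
   + (f (y + sqrt (y\<^sup>2 + 1)) - f (y - sqrt (y\<^sup>2 + 1))) * (y / sqrt (y\<^sup>2 + 1))"

end

theory Submission
  imports Defs
begin

(* The maps  y \<mapsto> y + s * sqrt (y\<^sup>2 + 1)  for s = 1 and s = -1 are the two
   branches of the inverse of  x \<mapsto> (x\<^sup>2 - 1) / (2 x); they are smooth increasing bijections
   of the real line onto (0,\<infinity>) and (-\<infinity>,0), with derivatives  1 \<plusminus> y / sqrt (y\<^sup>2 + 1).
   The right-hand integrand is exactly the sum of the two substituted integrands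
   (1 + t) f (y + sqrt (y\<^sup>2+1)) + (1 - t) f (y - sqrt (y\<^sup>2+1)),  t = y / sqrt (y\<^sup>2+1),
   so the change-of-variables theorem on both half lines gives the identity for every
   absolutely integrable f (rationality of f only provides Borel measurability).
   If f is even, so is the right-hand integrand, and both half-line integrals are half
   of the full-line integrals. *)

text \<open>For \<open>s = 1\<close> and \<open>s = -1\<close> these are the substitutions of the right-hand side.\<close>
definition branch :: "real \<Rightarrow> real \<Rightarrow> real" where
  "branch s y = y + s * sqrt (y\<^sup>2 + 1)"

text \<open>The key inequality: the square root dominates \<open>|y|\<close>, so all factors below are positive.\<close>
lemma abs_less_sqrt_sq_plus_one: "\<bar>y\<bar> < sqrt (y\<^sup>2 + 1)"
proof -
  have "sqrt (y\<^sup>2) < sqrt (y\<^sup>2 + 1)" by (intro real_sqrt_less_mono) simp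
  then show ?thesis by simp
qed

lemma branch_inverse:
  assumes "\<bar>s\<bar> = 1"
  shows "((branch s y)\<^sup>2 - 1) / (2 * branch s y) = y" and "branch s y \<noteq> 0"
proof -
  have s2: "s * s = 1" using assms abs_mult_self_eq[of s] by simp
  have "s = 1 \<or> s = -1" using assms by auto
  then show nz: "branch s y \<noteq> 0"
    using abs_less_sqrt_sq_plus_one[of y] unfolding branch_def by (auto simp: abs_less_iff)
  have "(branch s y)\<^sup>2 - 1 = 2 * branch s y * y"
    unfolding branch_def using s2 by (simp add: power2_eq_square algebra_simps)
  then show "((branch s y)\<^sup>2 - 1) / (2 * branch s y) = y" using nz by simp
qed

text \<open>Injectivity is the hypothesis needed for the change-of-variables theorem.\<close>
lemma inj_branch: "\<bar>s\<bar> = 1 \<Longrightarrow> inj (branch s)"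
  by (metis branch_inverse(1) injI)

lemma range_branch:
  assumes "\<bar>s\<bar> = 1"
  shows "range (branch s) = {x. 0 < s * x}"
proof safe
  fix y
  have "s = 1 \<or> s = -1" using assms by auto
  then show "0 < s * branch s y"
    using abs_less_sqrt_sq_plus_one[of y] unfolding branch_def by (auto simp: abs_less_iff)
next
  fix x :: real assume x: "0 < s * x"
  define y where "y = (x\<^sup>2 - 1) / (2 * x)"
  have "x \<noteq> 0" using x by auto
  have "y\<^sup>2 + 1 = ((x\<^sup>2 + 1) / (2 * x))\<^sup>2"
    unfolding y_def using \<open>x \<noteq> 0\<close> by (simp add: field_simps power2_eq_square)
  then have r: "sqrt (y\<^sup>2 + 1) = \<bar>(x\<^sup>2 + 1) / (2 * x)\<bar>" by simp
  have "s = 1 \<and> 0 < x \<or> s = -1 \<and> x < 0"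
    using assms x by (auto simp: abs_eq_iff zero_less_mult_iff)
  then have "s * sqrt (y\<^sup>2 + 1) = (x\<^sup>2 + 1) / (2 * x)" unfolding r
    by (auto simp: abs_of_pos abs_of_neg divide_pos_pos divide_pos_neg add_pos_nonneg minus_divide_left)
  then have "x = branch s y"
    unfolding branch_def y_def using \<open>x \<noteq> 0\<close> by (simp add: field_simps power2_eq_square)
  then show "x \<in> range (branch s)" by blast
qed

definition branch_deriv :: "real \<Rightarrow> real \<Rightarrow> real" where
  "branch_deriv s y = 1 + s * (y / sqrt (y\<^sup>2 + 1))"

lemma branch_has_derivative:
  "(branch s has_field_derivative branch_deriv s y) (at y within S)"
proof -
  have "0 < y\<^sup>2 + 1" by (simp add: add_nonneg_pos)
  then have "(branch s has_field_derivative 1 + s * (inverse (sqrt (y\<^sup>2 + 1)) / 2 * (2 * y)))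
               (at y within S)"
    unfolding branch_def by (auto intro!: derivative_eq_intros)
  then show ?thesis unfolding branch_deriv_def by (simp add: divide_simps)
qed

lemma branch_deriv_pos:
  assumes "\<bar>s\<bar> = 1"
  shows "0 < branch_deriv s y"
proof -
  have y: "\<bar>y\<bar> < sqrt (y\<^sup>2 + 1)" by (rule abs_less_sqrt_sq_plus_one)
  then have "0 < sqrt (y\<^sup>2 + 1)" by linarith
  with y have t: "\<bar>y / sqrt (y\<^sup>2 + 1)\<bar> < 1" by (simp add: abs_divide)
  have "s = 1 \<or> s = -1" using assms by auto
  then have "0 < 1 + s * t" if "\<bar>t\<bar> < 1" for t
    using that by (auto simp: abs_less_iff)
  from this[OF t] show ?thesis unfolding branch_deriv_def .
qed

lemma branch_substitution:
  fixes f :: "real \<Rightarrow> real"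
  assumes s: "\<bar>s\<bar> = 1" and f: "f absolutely_integrable_on {x. 0 < s * x}"
  shows "(\<lambda>y. branch_deriv s y * f (branch s y)) absolutely_integrable_on UNIV"
    and "integral UNIV (\<lambda>y. branch_deriv s y * f (branch s y)) = integral {x. 0 < s * x} f"
proof -
  have "(\<lambda>y. \<bar>branch_deriv s y\<bar> * f (branch s y)) absolutely_integrable_on UNIV \<and>
          integral UNIV (\<lambda>y. \<bar>branch_deriv s y\<bar> * f (branch s y)) = integral {x. 0 < s * x} f
        \<longleftrightarrow> f absolutely_integrable_on (branch s ` UNIV) \<and>
          integral (branch s ` UNIV) f = integral {x. 0 < s * x} f"
    using inj_branch[OF s] branch_has_derivative
    by (intro has_absolute_integral_change_of_variables_1') auto
  moreover have "\<bar>branch_deriv s y\<bar> = branch_deriv s y" for y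
    using branch_deriv_pos[OF s] by (simp add: less_imp_le)
  ultimately show "(\<lambda>y. branch_deriv s y * f (branch s y)) absolutely_integrable_on UNIV"
    and "integral UNIV (\<lambda>y. branch_deriv s y * f (branch s y)) = integral {x. 0 < s * x} f"
    using f range_branch[OF s] by simp_all
qed

lemma rhs_integrand_as_branches:
  "rhs_integrand f y =
     branch_deriv 1 y * f (branch 1 y) + branch_deriv (-1) y * f (branch (-1) y)"
  unfolding rhs_integrand_def branch_deriv_def branch_def by (simp add: algebra_simps)

lemma integral_split_at_zero:
  fixes h :: "real \<Rightarrow> real"
  assumes "h absolutely_integrable_on UNIV"
  shows "integral UNIV h = integral {..<0} h + integral {0<..} h"
proof -
  have "h absolutely_integrable_on {..<0}" "h absolutely_integrable_on {0<..}"
    using assms by (auto intro: set_integrable_subset)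
  then have "h integrable_on {..<0}" "h integrable_on {0<..}"
    by (auto dest: set_lebesgue_integral_eq_integral(1))
  moreover have "{..<0} \<inter> {0<..} = ({} :: real set)" by auto
  ultimately have "(h has_integral (integral {..<0} h + integral {0<..} h)) ({..<0} \<union> {0<..})"
    by (intro has_integral_Un) (auto simp: integrable_integral)
  moreover have "(h has_integral (integral {..<0} h + integral {0<..} h)) ({..<0} \<union> {0<..})
      \<longleftrightarrow> (h has_integral (integral {..<0} h + integral {0<..} h)) UNIV"
    by (rule has_integral_spike_set_eq; rule negligible_subset[of "{0}"]) auto
  ultimately have "(h has_integral (integral {..<0} h + integral {0<..} h)) UNIV"
    by blast
  then show ?thesis by (rule integral_unique)
qed

theorem rhs_integrand_absolutely_integrable:
  fixes f :: "real \<Rightarrow> real"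
  assumes f: "f absolutely_integrable_on UNIV"
  shows "rhs_integrand f absolutely_integrable_on UNIV"
    and "integral UNIV (rhs_integrand f) = integral UNIV f"
proof -
  have pos: "{x. 0 < 1 * x} = {0::real<..}" and neg: "{x. 0 < -1 * x} = {..<0::real}"
    by auto
  have "f absolutely_integrable_on {0<..}" "f absolutely_integrable_on {..<0}"
    using f by (auto intro: set_integrable_subset)
  then have
    ai1: "(\<lambda>y. branch_deriv 1 y * f (branch 1 y)) absolutely_integrable_on UNIV" and
    int1: "integral UNIV (\<lambda>y. branch_deriv 1 y * f (branch 1 y)) = integral {0<..} f" and
    ai2: "(\<lambda>y. branch_deriv (-1) y * f (branch (-1) y)) absolutely_integrable_on UNIV" and
    int2: "integral UNIV (\<lambda>y. branch_deriv (-1) y * f (branch (-1) y)) = integral {..<0} f"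
    using branch_substitution[of 1 f] branch_substitution[of "-1" f] by (simp_all only: pos neg)
  have rhs: "rhs_integrand f = (\<lambda>y. branch_deriv 1 y * f (branch 1 y)
                                    + branch_deriv (-1) y * f (branch (-1) y))"
    by (rule ext) (rule rhs_integrand_as_branches)
  show "rhs_integrand f absolutely_integrable_on UNIV"
    unfolding rhs by (rule set_integral_add(1)[OF ai1 ai2])
  have "integral UNIV (rhs_integrand f) = integral {0<..} f + integral {..<0} f"
    unfolding rhs using ai1 ai2 int1 int2
    by (simp add: integral_add set_lebesgue_integral_eq_integral(1))
  also have "\<dots> = integral UNIV f"
    using integral_split_at_zero[OF f] by simp
  finally show "integral UNIV (rhs_integrand f) = integral UNIV f" .
qed

lemma integral_even_half_line:
  fixes h :: "real \<Rightarrow> real"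
  assumes h: "h absolutely_integrable_on UNIV" and even: "\<And>x. h (-x) = h x"
  shows "integral {0<..} h = integral UNIV h / 2"
proof -
  have "(\<lambda>x. \<bar>-1\<bar> * h (- x)) absolutely_integrable_on {0<..} \<and>
          integral {0<..} (\<lambda>x. \<bar>-1\<bar> * h (- x)) = integral {0<..} h
        \<longleftrightarrow> h absolutely_integrable_on (uminus ` {0<..}) \<and>
          integral (uminus ` {0<..}) h = integral {0<..} h"
    by (rule has_absolute_integral_change_of_variables_1') (auto intro!: derivative_eq_intros)
  moreover have "uminus ` {0<..} = {..<(0::real)}"
    by (auto simp: image_iff intro!: exI[of _ "- _"])
  moreover have "h absolutely_integrable_on {0<..}"
    using h by (auto intro: set_integrable_subset)
  ultimately have "integral {..<0} h = integral {0<..} h"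
    using even by simp
  then show ?thesis using integral_split_at_zero[OF h] by simp
qed

text \<open>Evenness of \<open>f\<close> is inherited by the right-hand integrand (\<open>y \<mapsto> -y\<close> swaps the branches).\<close>
lemma rhs_integrand_even:
  assumes even: "\<forall>x. f (-x) = f x"
  shows "rhs_integrand f (-y) = rhs_integrand f y"
proof -
  let ?r = "sqrt (y\<^sup>2 + 1)"
  have "f (- y + ?r) = f (y - ?r)" "f (- y - ?r) = f (y + ?r)"
    using even[rule_format, of "y - ?r"] even[rule_format, of "y + ?r"] by simp_all
  then show ?thesis unfolding rhs_integrand_def by (simp add: algebra_simps)
qed

lemma integrable_lborel_iff_absolutely_integrable:
  fixes h :: "real \<Rightarrow> real"
  assumes "h \<in> borel_measurable borel"
  shows "integrable lborel h \<longleftrightarrow> h absolutely_integrable_on UNIV"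
  using assms integrable_completion[of h lborel] by (simp add: set_integrable_def)

lemma rat_fun_measurable: "rat_fun p q \<in> borel_measurable borel"
  unfolding rat_fun_def
  by (intro borel_measurable_divide borel_measurable_continuous_onI continuous_intros)

lemma rhs_integrand_measurable:
  assumes [measurable]: "f \<in> borel_measurable borel"
  shows "rhs_integrand f \<in> borel_measurable borel"
  unfolding rhs_integrand_def by measurable

lemma half_line_integral:
  fixes h :: "real \<Rightarrow> real"
  assumes "integrable lborel h"
  shows "set_integrable lborel {0<..} h" and "(LINT x:{0<..}|lborel. h x) = integral {0<..} h"
proof -
  show si: "set_integrable lborel {0<..} h"
    unfolding set_integrable_def by (rule integrable_mult_indicator[OF _ assms]) simp
  show "(LINT x:{0<..}|lborel. h x) = integral {0<..} h"
    by (rule set_borel_integral_eq_integral(2)[OF si])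
qed

theorem mainTheorem3:
  fixes p q :: "real poly"
  assumes "q \<noteq> 0"
    and "integrable lborel (rat_fun p q)"
  shows "(integrable lborel (rhs_integrand (rat_fun p q))
          \<and> integral\<^sup>L lborel (rat_fun p q) = integral\<^sup>L lborel (rhs_integrand (rat_fun p q)))
       \<and> ((\<forall>x. rat_fun p q (-x) = rat_fun p q x) \<longrightarrow>
          (set_integrable lborel {0<..} (rhs_integrand (rat_fun p q))
           \<and> (LINT x:{0<..}|lborel. rat_fun p q x)
               = (LINT y:{0<..}|lborel. rhs_integrand (rat_fun p q) y)))"
proof -
  define f where "f = rat_fun p q"
  have f_meas: "f \<in> borel_measurable borel" unfolding f_def by (rule rat_fun_measurable)
  have f_int: "integrable lborel f" using assms(2) unfolding f_def .
  then have f_abs: "f absolutely_integrable_on UNIV"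
    using integrable_lborel_iff_absolutely_integrable[OF f_meas] by blast
  note rhs_abs = rhs_integrand_absolutely_integrable[OF f_abs]
  have rhs_int: "integrable lborel (rhs_integrand f)"
    using rhs_abs(1) integrable_lborel_iff_absolutely_integrable
      rhs_integrand_measurable[OF f_meas] by blast
  have full_line: "integral\<^sup>L lborel f = integral\<^sup>L lborel (rhs_integrand f)"
    using rhs_abs(2) integral_lborel[OF f_int] integral_lborel[OF rhs_int] by simp
  have half_line: "(LINT x:{0<..}|lborel. f x) = (LINT y:{0<..}|lborel. rhs_integrand f y)"
    if even: "\<forall>x. f (-x) = f x"
    using half_line_integral(2)[OF f_int] half_line_integral(2)[OF rhs_int]
      integral_even_half_line[OF f_abs] integral_even_half_line[OF rhs_abs(1)]
      rhs_integrand_even[OF even] rhs_abs(2) even by simp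
  show ?thesis
    using rhs_int full_line half_line half_line_integral(1)[OF rhs_int] unfolding f_def by blast
qed

end
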